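(* Let $\operatorname{Erf}$, $u_k\in\mathbb{Q}[x,y]$ and $v_k\in\mathbb{Q}[y]$ be as defined in the context. For $n,m\in\mathbb{N}_0$ define polynomials $p_{n,m}=p^u_{n,m}+p^v_{n,m}$ and $q_{n,m}=q^u_{n,m}+q^v_{n,m}$ in $\mathbb{Q}[x,y]$ as follows: expand $u_n(x,y)\,y^m=\sum_k \alpha_k(x)y^k$ and $v_n(y)\,y^m=\sum_k\beta_k y^k$ in powers of $y$, and set \[ p^u_{n,m}(x,y)=\sum_k\alpha_k(x)\,u_k(y,x),\qquad q^u_{n,m}(x,y)=-\sum_k\alpha_k(x)\,v_k(x), \] \[ p^v_{n,m}(x,y)=\sum_k\beta_k\frac{u_{k+1}(y,x)}{k+1},\qquad q^v_{n,m}(x,y)=\sum_k\beta_k\frac{y^{k+1}-v_{k+1}(x)}{k+1}. \] Then $p_{n,m}$ has degree $n+m$, $q_{n,m}$ has degree $n+m+1$, and \[ \iint x^ny^me^{-(x-y)^2}\,dx\,dy=p_{n,m}(x,y)e^{-(x-y)^2}+q_{n,m}(x,y)\operatorname{Erf}(x-y), \] in the sense that $\partial_x\partial_y$ of the right-hand side equals $x^ny^me^{-(x-y)^2}$.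
   Context: $\operatorname{Erf}(\xi)=\int_0^\xi e^{-x^2}\,dx$. The polynomials $u_k\in\mathbb{Q}[x,y]$ and $v_k\in\mathbb{Q}[y]$ are defined by $u_0=0$, $v_0=1$, $u_{k+1}(x,y)=y\,u_k(x,y)+\frac k2u_{k-1}(x,y)-\frac{x^k}{2}$, $v_{k+1}(y)=y\,v_k(y)+\frac k2v_{k-1}(y)$ (for $k=0$ the terms with index $-1$ are multiplied by $0$). The notation $u_k(y,x)$ means $u_k$ with its two arguments interchanged, and $v_k(x)$ means $v_k$ evaluated at $x$. *)

theory Defs
  imports "HOL-Analysis.Analysis" "HOL-Computational_Algebra.Polynomial"
begin

text \<open>Bivariate polynomials in Q[x,y] are represented as  rat poly poly :
  the outer variable is y, the coefficients are polynomials in x, i.e.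
  P = sum_j c_j(x) y^j, and the coefficient of x^i y^j is coeff (coeff P j) i.\<close>

type_synonym bipoly = "rat poly poly"

definition Erf :: "real \<Rightarrow> real" where
  "Erf \<xi> = (if 0 \<le> \<xi> then integral {0..\<xi>} (\<lambda>x. exp (- (x\<^sup>2)))
             else - integral {\<xi>..0} (\<lambda>x. exp (- (x\<^sup>2))))"

definition X_pow :: "nat \<Rightarrow> bipoly" where "X_pow k = [: monom 1 k :]"
definition Y_pow :: "nat \<Rightarrow> bipoly" where "Y_pow k = monom 1 k"

fun u :: "nat \<Rightarrow> bipoly" where
  "u 0 = 0"
| "u (Suc 0) = Y_pow 1 * u 0 - smult [:1/2:] (X_pow 0)"
| "u (Suc (Suc k)) = Y_pow 1 * u (Suc k) + smult [:of_nat (Suc k) / 2:] (u k)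
                      - smult [:1/2:] (X_pow (Suc k))"

fun v :: "nat \<Rightarrow> rat poly" where
  "v 0 = 1"
| "v (Suc 0) = [:0, 1:] * v 0"
| "v (Suc (Suc k)) = [:0, 1:] * v (Suc k) + smult (of_nat (Suc k) / 2) (v k)"

text \<open>Interchange of the two arguments: c x^i y^j becomes c x^j y^i.\<close>
definition swap2 :: "bipoly \<Rightarrow> bipoly" where
  "swap2 P = (\<Sum>j\<le>degree P. \<Sum>i\<le>degree (coeff P j). monom (monom (coeff (coeff P j) i) j) i)"

definition at_x :: "rat poly \<Rightarrow> bipoly" where "at_x q = [: q :]"

definition pu :: "nat \<Rightarrow> nat \<Rightarrow> bipoly" where
  "pu n m = (let A = u n * Y_pow m in
     \<Sum>k\<le>degree A. [: coeff A k :] * swap2 (u k))"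

definition qu :: "nat \<Rightarrow> nat \<Rightarrow> bipoly" where
  "qu n m = (let A = u n * Y_pow m in
     - (\<Sum>k\<le>degree A. [: coeff A k :] * at_x (v k)))"

definition pv :: "nat \<Rightarrow> nat \<Rightarrow> bipoly" where
  "pv n m = (let B = v n * [:0,1:] ^ m in
     \<Sum>k\<le>degree B. smult [: coeff B k / of_nat (k+1) :] (swap2 (u (k+1))))"

definition qv :: "nat \<Rightarrow> nat \<Rightarrow> bipoly" where
  "qv n m = (let B = v n * [:0,1:] ^ m in
     \<Sum>k\<le>degree B. smult [: coeff B k / of_nat (k+1) :] (Y_pow (k+1) - at_x (v (k+1))))"

definition pnm :: "nat \<Rightarrow> nat \<Rightarrow> bipoly" where "pnm n m = pu n m + pv n m"
definition qnm :: "nat \<Rightarrow> nat \<Rightarrow> bipoly" where "qnm n m = qu n m + qv n m"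

text \<open>Total degree (of a nonzero bivariate polynomial).\<close>
definition total_degree :: "bipoly \<Rightarrow> nat" where
  "total_degree P = Max {i + j | i j. coeff (coeff P j) i \<noteq> 0}"

definition eval2 :: "bipoly \<Rightarrow> real \<Rightarrow> real \<Rightarrow> real" where
  "eval2 P x y = poly (map_poly (\<lambda>c. poly (map_poly of_rat c) x) P) y"

end

theory Submission
  imports Defs
begin

text \<open>
  The recurrences give d/da u_k(a,b) = a^k - 2(b - a) u_k(a,b) - v_k(b). Hence
  u_k(y,x) e^(-(x-y)^2) - v_k(x) Erf(x - y) is a y-primitive of y^k e^(-(x-y)^2), and
  u_(k+1)(y,x) e^(-(x-y)^2) + (y^(k+1) - v_(k+1)(x)) Erf(x - y) is one of (k+1) y^k Erf(x - y).
  Expanding u_n(x,y) y^m and v_n(y) y^m in powers of y, the right-hand side is therefore a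
  y-primitive of G = y^m (u_n(x,y) e^(-(x-y)^2) + v_n(y) Erf(x - y)), and the same derivative
  formula, now in x, gives d/dx G = x^n y^m e^(-(x-y)^2).

  For the degrees: u_k has total degree k - 1 with y^(k-1)-coefficient -1/2, and v_k is monic of
  degree k. So with N = n + m, the only monomials of top total degree come from the last summands
  of p^v and q^v, namely -x^N / (2(N+1)) and y^(N+1) / (N+1).
\<close>

lemma map_poly_add_hom:
  assumes "f 0 = 0" "\<And>a b. f (a + b) = f a + f b"
  shows "map_poly f (p + q) = map_poly f p + map_poly f q"
  by (intro poly_eqI) (simp add: coeff_map_poly assms)

lemma map_poly_mult_hom:
  fixes f :: "'a::comm_semiring_0 \<Rightarrow> 'b::comm_semiring_0"
  assumes "f 0 = 0" "\<And>a b. f (a + b) = f a + f b" "\<And>a b. f (a * b) = f a * f b"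
  shows "map_poly f (p * q) = map_poly f p * map_poly f q"
proof (intro poly_eqI)
  fix n
  show "coeff (map_poly f (p * q)) n = coeff (map_poly f p * map_poly f q) n"
    by (simp add: coeff_map_poly coeff_mult sum_comp_morphism[of f, OF assms(1,2), symmetric] assms(1,3))
qed

definition rat_poly_eval :: "rat poly \<Rightarrow> real \<Rightarrow> real" where
  "rat_poly_eval c x = poly (map_poly of_rat c) x"

lemma rat_poly_eval_0 [simp]: "rat_poly_eval 0 x = 0"
  by (simp add: rat_poly_eval_def)

lemma rat_poly_eval_1 [simp]: "rat_poly_eval 1 x = 1"
  by (simp add: rat_poly_eval_def)

lemma rat_poly_eval_add [simp]: "rat_poly_eval (p + q) x = rat_poly_eval p x + rat_poly_eval q x"
  by (simp add: rat_poly_eval_def map_poly_add_hom of_rat_add)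

lemma rat_poly_eval_mult [simp]: "rat_poly_eval (p * q) x = rat_poly_eval p x * rat_poly_eval q x"
  by (simp add: rat_poly_eval_def map_poly_mult_hom of_rat_add of_rat_mult)

lemma rat_poly_eval_monom [simp]: "rat_poly_eval (monom c k) x = of_rat c * x ^ k"
  by (simp add: rat_poly_eval_def map_poly_monom poly_monom)

lemma rat_poly_eval_pCons [simp]: "rat_poly_eval (pCons c p) x = of_rat c + x * rat_poly_eval p x"
  by (simp add: rat_poly_eval_def map_poly_pCons)

lemma rat_poly_eval_smult [simp]: "rat_poly_eval (smult c p) x = of_rat c * rat_poly_eval p x"
  by (simp add: rat_poly_eval_def map_poly_smult of_rat_mult)

lemma rat_poly_eval_power [simp]: "rat_poly_eval (p ^ k) x = rat_poly_eval p x ^ k"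
  by (induction k) simp_all

lemma rat_poly_eval_altdef: "rat_poly_eval c x = (\<Sum>i\<le>degree c. of_rat (coeff c i) * x ^ i)"
  by (simp add: rat_poly_eval_def poly_altdef degree_map_poly coeff_map_poly)

lemma eval2_altdef: "eval2 P x y = poly (map_poly (\<lambda>c. rat_poly_eval c x) P) y"
  by (simp add: eval2_def rat_poly_eval_def)

lemma eval2_0 [simp]: "eval2 0 x y = 0"
  by (simp add: eval2_def)

lemma eval2_add [simp]: "eval2 (P + Q) x y = eval2 P x y + eval2 Q x y"
  by (simp add: eval2_altdef map_poly_add_hom)

lemma eval2_mult [simp]: "eval2 (P * Q) x y = eval2 P x y * eval2 Q x y"
  by (simp add: eval2_altdef map_poly_mult_hom)

lemma eval2_uminus [simp]: "eval2 (- P) x y = - eval2 P x y"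
  using eval2_add[of P "- P" x y] by simp

lemma eval2_diff [simp]: "eval2 (P - Q) x y = eval2 P x y - eval2 Q x y"
  using eval2_add[of "P - Q" Q x y] by simp

lemma eval2_sum [simp]: "eval2 (sum f S) x y = (\<Sum>i\<in>S. eval2 (f i) x y)"
  by (induction S rule: infinite_finite_induct) auto

lemma eval2_monom [simp]: "eval2 (monom c k) x y = rat_poly_eval c x * y ^ k"
  by (simp add: eval2_altdef map_poly_monom poly_monom)

lemma eval2_const [simp]: "eval2 [:c:] x y = rat_poly_eval c x"
  using eval2_monom[of c 0] by (simp add: monom_0)

lemma eval2_smult [simp]: "eval2 (smult c P) x y = rat_poly_eval c x * eval2 P x y"
  using eval2_mult[of "[:c:]" P] by simp

lemma eval2_X_pow [simp]: "eval2 (X_pow k) x y = x ^ k"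
  by (simp add: X_pow_def)

lemma eval2_Y_pow [simp]: "eval2 (Y_pow k) x y = y ^ k"
  by (simp add: Y_pow_def)

lemma eval2_at_x [simp]: "eval2 (at_x q) x y = rat_poly_eval q x"
  by (simp add: at_x_def)

lemma eval2_as_sum: "eval2 P x y = (\<Sum>k\<le>degree P. rat_poly_eval (coeff P k) x * y ^ k)"
  by (subst poly_as_sum_of_monoms[symmetric]) simp

lemma eval2_swap2 [simp]: "eval2 (swap2 P) x y = eval2 P y x"
proof -
  have "eval2 P y x = (\<Sum>j\<le>degree P. \<Sum>i\<le>degree (coeff P j). of_rat (coeff (coeff P j) i) * x ^ j * y ^ i)"
    by (simp add: eval2_as_sum rat_poly_eval_altdef sum_distrib_left mult_ac)
  then show ?thesis
    by (simp add: swap2_def del: rat_poly_eval_altdef)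
qed

lemma eval2_u_Suc_Suc:
  "eval2 (u (Suc (Suc k))) x y
     = y * eval2 (u (Suc k)) x y + (real k + 1) / 2 * eval2 (u k) x y - x ^ Suc k / 2"
  by (simp add: of_rat_divide of_rat_add)

lemma has_real_derivative_eval2_u:
  "((\<lambda>a. eval2 (u k) a b) has_real_derivative
      a ^ k - 2 * (b - a) * eval2 (u k) a b - rat_poly_eval (v k) b) (at a)"
proof (induction k arbitrary: a rule: u.induct)
  case 1
  show ?case by simp
next
  case 2
  show ?case by (auto intro!: derivative_eq_intros simp: of_rat_divide field_simps)
next
  case (3 k)
  show ?case
    unfolding eval2_u_Suc_Suc
    by (auto intro!: derivative_eq_intros 3 simp del: power_Suc)
       (simp add: of_rat_divide of_rat_add field_simps)
qed

lemma Erf_eq_integral_diff: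
  assumes "a \<le> 0" "a \<le> \<xi>"
  shows "Erf \<xi> = integral {a..\<xi>} (\<lambda>x. exp (- (x\<^sup>2))) - integral {a..0} (\<lambda>x. exp (- (x\<^sup>2)))"
proof -
  have int: "(\<lambda>x. exp (- (x\<^sup>2))) integrable_on {c..d}" for c d :: real
    by (intro integrable_continuous_interval continuous_intros)
  show ?thesis
  proof (cases "0 \<le> \<xi>")
    case True
    then show ?thesis
      using Henstock_Kurzweil_Integration.integral_combine[OF assms(1) True int] by (simp add: Erf_def)
  next
    case False
    then show ?thesis
      using Henstock_Kurzweil_Integration.integral_combine[OF assms(2) _ int, of 0] by (simp add: Erf_def)
  qed
qed

lemma has_real_derivative_Erf: "(Erf has_real_derivative exp (- (t\<^sup>2))) (at t)"
proof -
  define a b where "a = - \<bar>t\<bar> - 1" and "b = \<bar>t\<bar> + 1"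
  have t: "t \<in> {a<..<b}"
    by (auto simp: a_def b_def)
  have "continuous_on {a..b} (\<lambda>x. exp (- (x\<^sup>2)))"
    by (intro continuous_intros)
  then have "((\<lambda>\<xi>. integral {a..\<xi>} (\<lambda>x. exp (- (x\<^sup>2)))) has_real_derivative exp (- (t\<^sup>2))) (at t)"
    using integral_has_real_derivative[of a b "\<lambda>x. exp (- (x\<^sup>2))" t] t
    by (simp add: at_within_Icc_at)
  then have "((\<lambda>\<xi>. integral {a..\<xi>} (\<lambda>x. exp (- (x\<^sup>2))) - integral {a..0} (\<lambda>x. exp (- (x\<^sup>2))))
               has_real_derivative exp (- (t\<^sup>2))) (at t)"
    using DERIV_diff[OF _ DERIV_const] by fastforce
  moreover have "Erf \<xi> = integral {a..\<xi>} (\<lambda>x. exp (- (x\<^sup>2))) - integral {a..0} (\<lambda>x. exp (- (x\<^sup>2)))"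
    if "\<xi> \<in> {a<..<b}" for \<xi>
    using that by (intro Erf_eq_integral_diff) (auto simp: a_def)
  ultimately show ?thesis
    using has_field_derivative_transform_within_open[where S = "{a<..<b}"] t by simp
qed

lemma has_real_derivative_Erf_comp [derivative_intros]:
  "(g has_real_derivative g') (at x within s) \<Longrightarrow>
   ((\<lambda>x. Erf (g x)) has_real_derivative exp (- ((g x)\<^sup>2)) * g') (at x within s)"
  using DERIV_chain2[OF has_real_derivative_Erf] by blast

lemma has_real_derivative_eval2_u_comp [derivative_intros]:
  "(g has_real_derivative g') (at t within s) \<Longrightarrow>
   ((\<lambda>t. eval2 (u k) (g t) b) has_real_derivative
      (g t ^ k - 2 * (b - g t) * eval2 (u k) (g t) b - rat_poly_eval (v k) b) * g') (at t within s)"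
  using DERIV_chain2[OF has_real_derivative_eval2_u] by blast

lemma primitive_pow_gauss:
  "((\<lambda>y. eval2 (u k) y x * exp (- ((x - y)\<^sup>2)) - rat_poly_eval (v k) x * Erf (x - y))
      has_real_derivative y ^ k * exp (- ((x - y)\<^sup>2))) (at y)"
  by (auto intro!: derivative_eq_intros simp: algebra_simps power2_eq_square)

lemma primitive_pow_Erf:
  "((\<lambda>y. eval2 (u (Suc k)) y x * exp (- ((x - y)\<^sup>2))
          + (y ^ Suc k - rat_poly_eval (v (Suc k)) x) * Erf (x - y))
      has_real_derivative (real k + 1) * y ^ k * Erf (x - y)) (at y)"
proof -
  have "y * y ^ (k - 1) = y ^ k" if "0 < k"
    using that by (cases k) auto
  then show ?thesis
    by (auto intro!: derivative_eq_intros simp: algebra_simps power2_eq_square)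
qed

lemma primitive_pow_gauss_x:
  "((\<lambda>x. eval2 (u n) x y * exp (- ((x - y)\<^sup>2)) + rat_poly_eval (v n) y * Erf (x - y))
      has_real_derivative x ^ n * exp (- ((x - y)\<^sup>2))) (at x)"
  by (auto intro!: derivative_eq_intros simp: algebra_simps power2_eq_square)

lemma pu_qu_primitive:
  "((\<lambda>y. eval2 (pu n m) x y * exp (- ((x - y)\<^sup>2)) + eval2 (qu n m) x y * Erf (x - y))
      has_real_derivative eval2 (u n) x y * y ^ m * exp (- ((x - y)\<^sup>2))) (at y)"
proof -
  define A where "A = u n * Y_pow m"
  have fun_eq: "(\<lambda>y. eval2 (pu n m) x y * exp (- ((x - y)\<^sup>2)) + eval2 (qu n m) x y * Erf (x - y))
      = (\<lambda>y. \<Sum>k\<le>degree A. rat_poly_eval (coeff A k) x *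
               (eval2 (u k) y x * exp (- ((x - y)\<^sup>2)) - rat_poly_eval (v k) x * Erf (x - y)))"
    by (simp add: pu_def qu_def Let_def A_def sum_distrib_left sum_distrib_right
        right_diff_distrib sum_subtractf mult_ac)
  have "(\<Sum>k\<le>degree A. rat_poly_eval (coeff A k) x * (y ^ k * exp (- ((x - y)\<^sup>2))))
      = (\<Sum>k\<le>degree A. rat_poly_eval (coeff A k) x * y ^ k) * exp (- ((x - y)\<^sup>2))"
    by (simp add: sum_distrib_right mult.assoc)
  also have "\<dots> = eval2 (u n) x y * y ^ m * exp (- ((x - y)\<^sup>2))"
    by (simp add: eval2_as_sum[symmetric] A_def)
  finally have deriv_eq: "(\<Sum>k\<le>degree A. rat_poly_eval (coeff A k) x * (y ^ k * exp (- ((x - y)\<^sup>2))))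
      = eval2 (u n) x y * y ^ m * exp (- ((x - y)\<^sup>2))" .
  show ?thesis
    unfolding fun_eq deriv_eq[symmetric] by (intro DERIV_sum DERIV_cmult primitive_pow_gauss)
qed

lemma pv_qv_primitive:
  "((\<lambda>y. eval2 (pv n m) x y * exp (- ((x - y)\<^sup>2)) + eval2 (qv n m) x y * Erf (x - y))
      has_real_derivative rat_poly_eval (v n) y * y ^ m * Erf (x - y)) (at y)"
proof -
  define B where "B = v n * [:0, 1:] ^ m"
  define c where "c k = (of_rat (coeff B k) :: real) / (real k + 1)" for k
  have fun_eq: "(\<lambda>y. eval2 (pv n m) x y * exp (- ((x - y)\<^sup>2)) + eval2 (qv n m) x y * Erf (x - y))
      = (\<lambda>y. \<Sum>k\<le>degree B. c k *
               (eval2 (u (Suc k)) y x * exp (- ((x - y)\<^sup>2))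
                + (y ^ Suc k - rat_poly_eval (v (Suc k)) x) * Erf (x - y)))"
    by (simp add: pv_def qv_def Let_def B_def c_def sum_distrib_left sum_distrib_right
        distrib_left sum.distrib of_rat_divide of_rat_add add.commute mult_ac)
  have "(\<Sum>k\<le>degree B. c k * ((real k + 1) * y ^ k * Erf (x - y)))
      = (\<Sum>k\<le>degree B. of_rat (coeff B k) * y ^ k) * Erf (x - y)"
    unfolding sum_distrib_right by (intro sum.cong refl) (simp add: c_def field_simps)
  also have "\<dots> = rat_poly_eval (v n) y * y ^ m * Erf (x - y)"
    by (simp add: B_def rat_poly_eval_altdef[symmetric])
  finally have deriv_eq: "(\<Sum>k\<le>degree B. c k * ((real k + 1) * y ^ k * Erf (x - y)))
      = rat_poly_eval (v n) y * y ^ m * Erf (x - y)" .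
  show ?thesis
    unfolding fun_eq deriv_eq[symmetric] by (intro DERIV_sum DERIV_cmult primitive_pow_Erf)
qed

lemma pnm_qnm_primitive:
  "((\<lambda>y. eval2 (pnm n m) x y * exp (- ((x - y)\<^sup>2)) + eval2 (qnm n m) x y * Erf (x - y))
      has_real_derivative
      y ^ m * (eval2 (u n) x y * exp (- ((x - y)\<^sup>2)) + rat_poly_eval (v n) y * Erf (x - y))) (at y)"
  using DERIV_add[OF pu_qu_primitive[of n m x y] pv_qv_primitive[of n m x y]]
  by (simp add: pnm_def qnm_def algebra_simps)

definition total_degree_le :: "bipoly \<Rightarrow> nat \<Rightarrow> bool" where
  "total_degree_le P d \<longleftrightarrow> (\<forall>i j. coeff (coeff P j) i \<noteq> 0 \<longrightarrow> i + j \<le> d)"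

lemma total_degree_le_coeff_coeff_eq_0: "total_degree_le P d \<Longrightarrow> d < i + j \<Longrightarrow> coeff (coeff P j) i = 0"
  unfolding total_degree_le_def by force

lemma total_degree_le_coeff_eq_0: "total_degree_le P d \<Longrightarrow> d < k \<Longrightarrow> coeff P k = 0"
  by (intro poly_eqI) (simp add: total_degree_le_coeff_coeff_eq_0)

lemma total_degree_le_0 [simp]: "total_degree_le 0 d"
  by (simp add: total_degree_le_def)

lemma total_degree_le_mono: "total_degree_le P d \<Longrightarrow> d \<le> e \<Longrightarrow> total_degree_le P e"
  unfolding total_degree_le_def by force

lemma total_degree_le_add: "total_degree_le P d \<Longrightarrow> total_degree_le Q d \<Longrightarrow> total_degree_le (P + Q) d"
  unfolding total_degree_le_def by force

lemma total_degree_le_uminus: "total_degree_le P d \<Longrightarrow> total_degree_le (- P) d"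
  unfolding total_degree_le_def by force

lemma total_degree_le_diff: "total_degree_le P d \<Longrightarrow> total_degree_le Q d \<Longrightarrow> total_degree_le (P - Q) d"
  unfolding total_degree_le_def by force

lemma total_degree_le_sum: "(\<And>k. k \<in> S \<Longrightarrow> total_degree_le (f k) d) \<Longrightarrow> total_degree_le (sum f S) d"
  by (induction S rule: infinite_finite_induct) (auto intro: total_degree_le_add)

lemma total_degree_le_mult:
  assumes P: "total_degree_le P a" and Q: "total_degree_le Q b"
  shows "total_degree_le (P * Q) (a + b)"
  unfolding total_degree_le_def
proof (intro allI impI)
  fix i j
  assume "coeff (coeff (P * Q) j) i \<noteq> 0"
  then have "(\<Sum>l\<le>j. \<Sum>r\<le>i. coeff (coeff P l) r * coeff (coeff Q (j - l)) (i - r)) \<noteq> 0"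
    by (simp add: coeff_mult coeff_sum)
  then obtain l r where "l \<le> j" "r \<le> i"
    and "coeff (coeff P l) r * coeff (coeff Q (j - l)) (i - r) \<noteq> 0"
    by (metis (no_types, lifting) atMost_iff sum.neutral)
  then have "r + l \<le> a" "(i - r) + (j - l) \<le> b"
    using P Q unfolding total_degree_le_def by (metis mult_eq_0_iff)+
  with \<open>l \<le> j\<close> \<open>r \<le> i\<close> show "i + j \<le> a + b" by linarith
qed

lemma total_degree_le_const: "total_degree_le [:c:] (degree c)"
  unfolding total_degree_le_def
proof (intro allI impI)
  fix i j assume "coeff (coeff [:c:] j) i \<noteq> 0"
  then have "j = 0" "coeff c i \<noteq> 0" by (cases j; simp)+
  then show "i + j \<le> degree c" using le_degree by auto
qed

lemma total_degree_le_smult_const: "total_degree_le P d \<Longrightarrow> total_degree_le (smult [:c:] P) d"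
  using total_degree_le_mult[OF total_degree_le_const[of "[:c:]"], of P d] by simp

lemma total_degree_le_coeff: "total_degree_le P d \<Longrightarrow> total_degree_le [:coeff P k:] (d - k)"
proof (cases "coeff P k = 0")
  case False
  assume P: "total_degree_le P d"
  have "degree (coeff P k) + k \<le> d"
    using P False unfolding total_degree_le_def by (metis leading_coeff_0_iff)
  then show ?thesis
    using total_degree_le_mono[OF total_degree_le_const[of "coeff P k"]] by simp
qed simp

lemma total_degree_le_X_pow: "total_degree_le (X_pow k) k"
  using total_degree_le_const[of "monom 1 k"] by (simp add: X_pow_def degree_monom_eq)

lemma total_degree_le_Y_pow: "total_degree_le (Y_pow k) k"
  unfolding total_degree_le_def Y_pow_def by (auto simp: coeff_monom split: if_splits)

lemma total_degree_le_at_x: "total_degree_le (at_x q) (degree q)"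
  unfolding at_x_def by (rule total_degree_le_const)

lemma coeff_swap2: "coeff (coeff (swap2 P) j) i = coeff (coeff P i) j"
proof -
  have monom: "coeff (coeff (monom (monom c l) r) j) i = (if i = l then if j = r then c else 0 else 0)"
    for c :: rat and l r
    by (simp add: coeff_monom)
  have "coeff (coeff (swap2 P) j) i
      = (\<Sum>l\<le>degree P. if i = l then (\<Sum>r\<le>degree (coeff P l). if j = r then coeff (coeff P l) r else 0) else 0)"
    unfolding swap2_def coeff_sum monom by (intro sum.cong refl) auto
  also have "\<dots> = coeff (coeff P i) j"
    by (simp add: sum.delta' coeff_eq_0)
  finally show ?thesis .
qed

lemma total_degree_le_swap2: "total_degree_le P d \<Longrightarrow> total_degree_le (swap2 P) d"
  unfolding total_degree_le_def coeff_swap2 by force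

lemma total_degree_le_u: "total_degree_le (u k) (k - 1)"
proof (induction k rule: u.induct)
  case (3 k)
  have "total_degree_le (Y_pow 1 * u (Suc k)) (Suc k)"
    using total_degree_le_mult[OF total_degree_le_Y_pow[of 1] 3(1)] by (simp add: plus_1_eq_Suc)
  moreover have "total_degree_le (smult [:of_nat (Suc k) / 2:] (u k)) (Suc k)"
    using total_degree_le_mono[OF total_degree_le_smult_const[OF 3(2)]] by simp
  moreover have "total_degree_le (smult [:1 / 2:] (X_pow (Suc k))) (Suc k)"
    by (intro total_degree_le_smult_const total_degree_le_X_pow)
  ultimately have "total_degree_le (Y_pow 1 * u (Suc k) + smult [:of_nat (Suc k) / 2:] (u k)
      - smult [:1 / 2:] (X_pow (Suc k))) (Suc k)"
    by (intro total_degree_le_diff total_degree_le_add)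
  then show ?case
    by (simp only: u.simps diff_Suc_1)
qed (simp_all add: total_degree_le_uminus total_degree_le_smult_const total_degree_le_X_pow)

lemma coeff_u_Suc_top: "coeff (coeff (u (Suc k)) k) 0 = - 1 / 2"
proof (induction k)
  case (Suc k)
  have "coeff (u k) (Suc k) = 0"
    using total_degree_le_coeff_eq_0[OF total_degree_le_u] by simp
  with Suc show ?case
    by (simp add: Y_pow_def X_pow_def coeff_monom_mult)
qed (simp add: X_pow_def)

lemma degree_v_le_and_coeff_v: "degree (v k) \<le> k \<and> coeff (v k) k = 1"
proof (induction k rule: v.induct)
  case (3 k)
  have "v (Suc (Suc k)) = pCons 0 (v (Suc k)) + smult (of_nat (Suc k) / 2) (v k)"
    by simp
  moreover have "degree (pCons 0 (v (Suc k))) \<le> Suc (Suc k)"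
    using 3(1) degree_pCons_le[of 0 "v (Suc k)"] by linarith
  moreover have "degree (smult (of_nat (Suc k) / 2) (v k)) \<le> Suc (Suc k)"
    using 3(2) degree_smult_le[of "of_nat (Suc k) / 2" "v k"] by linarith
  moreover have "coeff (v k) (Suc (Suc k)) = 0"
    using 3(2) by (intro coeff_eq_0) linarith
  ultimately show ?case
    using 3(1) by (auto intro: degree_add_le)
qed simp_all

lemma degree_v [simp]: "degree (v k) = k"
  using degree_v_le_and_coeff_v[of k] le_degree[of "v k" k] by auto

lemma coeff_v_self [simp]: "coeff (v k) k = 1"
  using degree_v_le_and_coeff_v by blast

lemma total_degree_eqI:
  assumes "total_degree_le P d" "coeff (coeff P j) i \<noteq> 0" "i + j = d"
  shows "P \<noteq> 0 \<and> total_degree P = d"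
proof
  show "P \<noteq> 0"
    using assms(2) by auto
  let ?S = "{i + j | i j. coeff (coeff P j) i \<noteq> 0}"
  have "?S \<subseteq> {..d}"
    using assms(1) unfolding total_degree_le_def by auto
  moreover have "d \<in> ?S"
    using assms(2,3) by blast
  ultimately show "total_degree P = d"
    unfolding total_degree_def by (intro Max_eqI) (auto intro: finite_subset)
qed

lemma coeff_sum_atMost_top:
  assumes "\<And>k. total_degree_le (T k) (k + e)" "i + j = N + e"
  shows "coeff (coeff (\<Sum>k\<le>N. T k) j) i = coeff (coeff (T N) j) i"
proof -
  have "coeff (coeff (\<Sum>k<N. T k) j) i = 0"
    unfolding coeff_sum using assms by (intro sum.neutral ballI total_degree_le_coeff_coeff_eq_0) auto
  then show ?thesis
    by (simp add: lessThan_Suc_atMost[symmetric] coeff_add)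
qed

lemma total_degree_le_sum_coeff_mult:
  assumes "total_degree_le A d" "\<And>k. total_degree_le (T k) k"
  shows "total_degree_le (\<Sum>k\<le>degree A. [:coeff A k:] * T k) d"
proof (intro total_degree_le_sum)
  fix k
  show "total_degree_le ([:coeff A k:] * T k) d"
  proof (cases "k \<le> d")
    case True
    then show ?thesis
      using total_degree_le_mult[OF total_degree_le_coeff[OF assms(1)] assms(2), of k k] by simp
  next
    case False
    then show ?thesis
      using total_degree_le_coeff_eq_0[OF assms(1)] by simp
  qed
qed

lemma total_degree_le_u_mult_Y_pow: "total_degree_le (u n * Y_pow m) (n + m - 1)"
proof (cases n)
  case (Suc n')
  then show ?thesis
    using total_degree_le_mult[OF total_degree_le_u total_degree_le_Y_pow, of n m] by simp
qed simp

lemma total_degree_le_pu: "total_degree_le (pu n m) (n + m - 1)"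
  unfolding pu_def Let_def
  by (intro total_degree_le_sum_coeff_mult total_degree_le_u_mult_Y_pow
      total_degree_le_swap2 total_degree_le_mono[OF total_degree_le_u]) simp

lemma total_degree_le_qu: "total_degree_le (qu n m) (n + m - 1)"
  unfolding qu_def Let_def
  by (intro total_degree_le_uminus total_degree_le_sum_coeff_mult total_degree_le_u_mult_Y_pow)
     (metis total_degree_le_at_x degree_v)

lemma coeff_pu_eq_0:
  assumes "n + m \<le> i + j"
  shows "coeff (coeff (pu n m) j) i = 0"
proof (cases "n = 0")
  case True
  then show ?thesis by (simp add: pu_def)
next
  case False
  with assms show ?thesis
    by (intro total_degree_le_coeff_coeff_eq_0[OF total_degree_le_pu]) simp
qed

lemma degree_v_mult_X_pow: "degree (v n * [:0, 1:] ^ m) = n + m"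
  and coeff_v_mult_X_pow_top: "coeff (v n * [:0, 1:] ^ m) (n + m) = 1"
proof -
  have eq: "v n * [:0, 1:] ^ m = monom 1 m * v n"
    by (simp add: monom_altdef mult.commute)
  show "coeff (v n * [:0, 1:] ^ m) (n + m) = 1"
    unfolding eq coeff_monom_mult by (simp add: add.commute)
  moreover have "degree (v n * [:0, 1:] ^ m) \<le> n + m"
    unfolding eq using degree_mult_le[of "monom (1::rat) m" "v n"] by (simp add: degree_monom_eq)
  ultimately show "degree (v n * [:0, 1:] ^ m) = n + m"
    by (metis le_antisym le_degree one_neq_zero)
qed

lemma total_degree_pnm: "pnm n m \<noteq> 0 \<and> total_degree (pnm n m) = n + m"
proof -
  define B where "B = v n * [:0, 1:] ^ m"
  define T where "T k = smult [:coeff B k / of_nat (k + 1):] (swap2 (u (k + 1)))" for k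
  have T: "total_degree_le (T k) k" for k
    unfolding T_def
    using total_degree_le_smult_const[OF total_degree_le_swap2[OF total_degree_le_u[of "k + 1"]]] by simp
  have pv: "pv n m = (\<Sum>k\<le>n + m. T k)"
    by (simp add: pv_def Let_def B_def[symmetric] T_def degree_v_mult_X_pow[of n m, folded B_def])
  have bound: "total_degree_le (pnm n m) (n + m)"
    unfolding pnm_def pv
    by (intro total_degree_le_add total_degree_le_mono[OF total_degree_le_pu]
        total_degree_le_sum total_degree_le_mono[OF T]) auto
  have "coeff (coeff (pv n m) 0) (n + m) = coeff (coeff (T (n + m)) 0) (n + m)"
    unfolding pv by (rule coeff_sum_atMost_top[where e = 0]) (simp_all add: T)
  then have top: "coeff (coeff (pnm n m) 0) (n + m) = - 1 / (2 * (of_nat (n + m) + 1))"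
    by (simp add: pnm_def coeff_pu_eq_0 T_def coeff_swap2 coeff_u_Suc_top B_def coeff_v_mult_X_pow_top)
  show ?thesis
    using top by (intro total_degree_eqI[OF bound, where i = "n + m" and j = 0]) (simp_all del: of_nat_add)
qed

lemma total_degree_qnm: "qnm n m \<noteq> 0 \<and> total_degree (qnm n m) = n + m + 1"
proof -
  define B where "B = v n * [:0, 1:] ^ m"
  define T where "T k = smult [:coeff B k / of_nat (k + 1):] (Y_pow (k + 1) - at_x (v (k + 1)))" for k
  have T: "total_degree_le (T k) (k + 1)" for k
    unfolding T_def
    by (intro total_degree_le_smult_const total_degree_le_diff total_degree_le_Y_pow)
       (metis total_degree_le_at_x degree_v)
  have qv: "qv n m = (\<Sum>k\<le>n + m. T k)"
    by (simp add: qv_def Let_def B_def[symmetric] T_def degree_v_mult_X_pow[of n m, folded B_def])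
  have bound: "total_degree_le (qnm n m) (n + m + 1)"
    unfolding qnm_def qv
    by (intro total_degree_le_add total_degree_le_mono[OF total_degree_le_qu]
        total_degree_le_sum total_degree_le_mono[OF T]) auto
  have "coeff (coeff (qv n m) (n + m + 1)) 0 = coeff (coeff (T (n + m)) (n + m + 1)) 0"
    unfolding qv by (rule coeff_sum_atMost_top[OF T]) simp
  then have top: "coeff (coeff (qnm n m) (n + m + 1)) 0 = 1 / (of_nat (n + m) + 1)"
    by (simp add: qnm_def total_degree_le_coeff_coeff_eq_0[OF total_degree_le_qu] T_def Y_pow_def
        at_x_def B_def coeff_v_mult_X_pow_top)
  show ?thesis
    using top by (intro total_degree_eqI[OF bound, where i = 0 and j = "n + m + 1"]) (simp_all del: of_nat_add)
qed

theorem corollary1: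
  fixes n m :: nat
  defines "F \<equiv> (\<lambda>x y. eval2 (pnm n m) x y * exp (- ((x - y)\<^sup>2))
                      + eval2 (qnm n m) x y * Erf (x - y))"
  shows "pnm n m \<noteq> 0 \<and> total_degree (pnm n m) = n + m
       \<and> qnm n m \<noteq> 0 \<and> total_degree (qnm n m) = n + m + 1
       \<and> (\<exists>G. (\<forall>x y. ((\<lambda>y'. F x y') has_real_derivative G x y) (at y))
              \<and> (\<forall>x y. ((\<lambda>x'. G x' y) has_real_derivative
                         x ^ n * y ^ m * exp (- ((x - y)\<^sup>2))) (at x)))"
proof -
  define G where "G x y = y ^ m * (eval2 (u n) x y * exp (- ((x - y)\<^sup>2))
                                   + rat_poly_eval (v n) y * Erf (x - y))" for x y
  have "((\<lambda>y'. F x y') has_real_derivative G x y) (at y)" for x y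
    unfolding F_def G_def by (rule pnm_qnm_primitive)
  moreover have "((\<lambda>x'. G x' y) has_real_derivative x ^ n * y ^ m * exp (- ((x - y)\<^sup>2))) (at x)" for x y
    unfolding G_def using DERIV_cmult[OF primitive_pow_gauss_x[of n y x], of "y ^ m"]
    by (simp add: mult_ac)
  ultimately show ?thesis
    using total_degree_pnm total_degree_qnm by blast
qed

end
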